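(* For any grid $\mathcal G$ and any $\delta<c(\mathcal G)/2$, if $M$ is a finitely presented $n$-parameter persistence module then $d_I(\mathsf M^{\mathcal G}_\delta(M),M)\leq\delta$.
   Context: Modules are $\mathbb{R}^n$-graded modules over $P_n$ (monoid ring over a field of $([0,\infty)^n,+)$). A grid is $\mathcal G=\prod_i\mathcal G^i$, $\mathcal G^i:[k_i]\to\mathbb{R}$, with controlling constant $c(\mathcal G)=\min\{\|\vec a-\vec b\|_\infty:\vec a\ne\vec b\in\mathrm{Im}\,\mathcal G\}$. The merge function $\mathsf M^{\mathcal G}_\delta:\mathbb{R}^n\to\mathbb{R}^n$ acts coordinatewise by sending $x$ to $\mathcal G^i(k)$ if $x\in[\mathcal G^i(k)-\delta,\mathcal G^i(k)+\delta]$, else fixing $x$. Given a presentation $F_1\xrightarrow{p_1}F_0\to M$ with $F_0,F_1$ finitely generated free, $\mathsf M^{\mathcal G}_\delta(M)$ is the cokernel of the map obtained by replacing every generator grade $\vec g$ by $\mathsf M^{\mathcal G}_\delta(\vec g)$ and every monomial $\vec x^{\vec r-\vec b}$ in $p_1$ by $\vec x^{\mathsf M(\vec r)-\mathsf M(\vec b)}$. $d_I$ is the interleaving distance: $M,N$ are $\varepsilon$-interleaved if there are natural maps $M_{\vec a}\to N_{\vec a+\varepsilon\vec1}$, $N_{\vec a}\to M_{\vec a+\varepsilon\vec1}$ whose composites are the internal maps shifting by $2\varepsilon\vec1$; $d_I$ is the infimum of such $\varepsilon$. *)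

theory Defs
  imports "HOL-Analysis.Analysis"
begin

definition vle :: "real^'n::finite \<Rightarrow> real^'n \<Rightarrow> bool" where
  "vle a b \<longleftrightarrow> (\<forall>i. a $ i \<le> b $ i)"

definition vshift :: "real^'n::finite \<Rightarrow> real \<Rightarrow> real^'n" where
  "vshift a e = (\<chi> i. a $ i + e)"

definition grid_coord_im :: "('n::finite \<Rightarrow> nat \<Rightarrow> real) \<Rightarrow> ('n \<Rightarrow> nat) \<Rightarrow> 'n \<Rightarrow> real set" where
  "grid_coord_im G k i = G i ` {1..k i}"

definition grid_im :: "('n::finite \<Rightarrow> nat \<Rightarrow> real) \<Rightarrow> ('n \<Rightarrow> nat) \<Rightarrow> (real^'n) set" where
  "grid_im G k = {a. \<forall>i. a $ i \<in> grid_coord_im G k i}"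

text \<open>Controlling constant c(G) = min of the sup-norm distance of distinct grid points
  (extended real; it is +infinity when the grid has at most one point).\<close>

definition grid_const :: "('n::finite \<Rightarrow> nat \<Rightarrow> real) \<Rightarrow> ('n \<Rightarrow> nat) \<Rightarrow> ereal" where
  "grid_const G k = Inf ((\<lambda>(a, b). ereal (infnorm (a - b))) `
      {(a, b). a \<in> grid_im G k \<and> b \<in> grid_im G k \<and> a \<noteq> b})"

definition merge_coord :: "real set \<Rightarrow> real \<Rightarrow> real \<Rightarrow> real" where
  "merge_coord S \<delta> x =
     (if \<exists>y\<in>S. y - \<delta> \<le> x \<and> x \<le> y + \<delta> then (SOME y. y \<in> S \<and> y - \<delta> \<le> x \<and> x \<le> y + \<delta>) else x)"

definition merge :: "('n::finite \<Rightarrow> nat \<Rightarrow> real) \<Rightarrow> ('n \<Rightarrow> nat) \<Rightarrow> real \<Rightarrow> real^'n \<Rightarrow> real^'n" where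
  "merge G k \<delta> x = (\<chi> i. merge_coord (grid_coord_im G k i) \<delta> (x $ i))"

text \<open>A presentation F1 --p1--> F0 -> M with F0 free on generators e_0..e_{ngen-1}
  of grades ggr i, F1 free on generators f_0..f_{nrel-1} of grades rgr j, and
  p1(f_j) = sum_i coef i j * x^(rgr j - ggr i) e_i (homogeneous map; a monomial
  is only allowed when ggr i <= rgr j).\<close>

record ('k, 'n) pres =
  ngen :: nat
  ggr  :: "nat \<Rightarrow> real^'n"
  nrel :: nat
  rgr  :: "nat \<Rightarrow> real^'n"
  coef :: "nat \<Rightarrow> nat \<Rightarrow> 'k"

definition pres_wf :: "('k::field, 'n::finite) pres \<Rightarrow> bool" where
  "pres_wf P \<longleftrightarrow> (\<forall>i j. coef P i j \<noteq> 0 \<longrightarrow>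
       i < ngen P \<and> j < nrel P \<and> vle (ggr P i) (rgr P j))"

text \<open>Degree-a part of F0: coefficient vectors supported on generators of grade <= a
  (monomials are implicit: the element sum v_i x^(a - ggr i) e_i).\<close>

definition Fz :: "('k::field, 'n::finite) pres \<Rightarrow> real^'n \<Rightarrow> (nat \<Rightarrow> 'k) set" where
  "Fz P a = {v. \<forall>i. v i \<noteq> 0 \<longrightarrow> i < ngen P \<and> vle (ggr P i) a}"

definition Im1 :: "('k::field, 'n::finite) pres \<Rightarrow> real^'n \<Rightarrow> (nat \<Rightarrow> 'k) set" where
  "Im1 P a = {(\<lambda>i. \<Sum>j<nrel P. coef P i j * y j) | y.
                 \<forall>j. y j \<noteq> 0 \<longrightarrow> j < nrel P \<and> vle (rgr P j) a}"

text \<open>The module M = coker p1 has M_a = Fz P a / Im1 P a, with internal maps induced by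
  the inclusions Fz P a \<subseteq> Fz P b (a <= b).  A (graded) linear map M_a -> N_(a+eps)
  for all a, natural in a, is represented by a family of linear lifts
  f a : Fz P a -> Fz Q (a + eps) mapping Im1 P a into Im1 Q (a+eps)
  (over a field every linear map between the quotients lifts); naturality holds
  modulo the relations.\<close>

definition shift_mor ::
  "('k::field, 'n::finite) pres \<Rightarrow> ('k, 'n) pres \<Rightarrow> real \<Rightarrow>
   (real^'n \<Rightarrow> (nat \<Rightarrow> 'k) \<Rightarrow> (nat \<Rightarrow> 'k)) \<Rightarrow> bool" where
  "shift_mor P Q e f \<longleftrightarrow>
     (\<forall>a. (\<forall>u\<in>Fz P a. \<forall>v\<in>Fz P a. f a (\<lambda>i. u i + v i) = (\<lambda>i. f a u i + f a v i))
        \<and> (\<forall>c. \<forall>v\<in>Fz P a. f a (\<lambda>i. c * v i) = (\<lambda>i. c * f a v i))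
        \<and> f a ` Fz P a \<subseteq> Fz Q (vshift a e)
        \<and> f a ` Im1 P a \<subseteq> Im1 Q (vshift a e))
   \<and> (\<forall>a b. vle a b \<longrightarrow> (\<forall>v\<in>Fz P a. (\<lambda>i. f b v i - f a v i) \<in> Im1 Q (vshift b e)))"

definition interleaved ::
  "('k::field, 'n::finite) pres \<Rightarrow> ('k, 'n) pres \<Rightarrow> real \<Rightarrow> bool" where
  "interleaved P Q e \<longleftrightarrow>
     (\<exists>f g. shift_mor P Q e f \<and> shift_mor Q P e g
        \<and> (\<forall>a. \<forall>v\<in>Fz P a. (\<lambda>i. g (vshift a e) (f a v) i - v i) \<in> Im1 P (vshift a (2 * e)))
        \<and> (\<forall>a. \<forall>v\<in>Fz Q a. (\<lambda>i. f (vshift a e) (g a v) i - v i) \<in> Im1 Q (vshift a (2 * e))))"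

text \<open>Interleaving distance (extended real; +infinity if never interleaved).\<close>

definition dI :: "('k::field, 'n::finite) pres \<Rightarrow> ('k, 'n) pres \<Rightarrow> ereal" where
  "dI P Q = Inf (ereal ` {e. 0 \<le> e \<and> interleaved P Q e})"

definition merge_pres ::
  "('n::finite \<Rightarrow> nat \<Rightarrow> real) \<Rightarrow> ('n \<Rightarrow> nat) \<Rightarrow> real \<Rightarrow> ('k, 'n) pres \<Rightarrow> ('k, 'n) pres" where
  "merge_pres G k \<delta> P = P\<lparr>ggr := merge G k \<delta> \<circ> ggr P, rgr := merge G k \<delta> \<circ> rgr P\<rparr>"

end

theory Submission
  imports Defs
begin

text \<open>Merging moves every coordinate of every grade by at most \<delta>. Hence the two presentations
  have the same generators, relations and coefficients, with grades that differ by at most \<delta>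
  in each coordinate, and the identity on coefficient vectors defines shift morphisms in both
  directions whose composites are the identity, i.e. a \<delta>-interleaving.\<close>

definition close_regrading :: "('k::field, 'n::finite) pres \<Rightarrow> ('k, 'n) pres \<Rightarrow> real \<Rightarrow> bool" where
  "close_regrading P Q e \<longleftrightarrow>
     ngen Q = ngen P \<and> nrel Q = nrel P \<and> coef Q = coef P
     \<and> (\<forall>j i. \<bar>ggr Q j $ i - ggr P j $ i\<bar> \<le> e)
     \<and> (\<forall>j i. \<bar>rgr Q j $ i - rgr P j $ i\<bar> \<le> e)"

lemma close_regrading_sym: "close_regrading P Q e \<Longrightarrow> close_regrading Q P e"
  unfolding close_regrading_def by (simp add: abs_minus_commute)

lemma vle_vshift_if_close:
  assumes "vle x a" and "\<And>i. \<bar>y $ i - x $ i\<bar> \<le> e"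
  shows "vle y (vshift a e)"
  unfolding vle_def vshift_def
proof
  fix i
  have "x $ i \<le> a $ i" "y $ i - x $ i \<le> e"
    using assms unfolding vle_def by (auto simp: abs_le_iff)
  then show "y $ i \<le> (\<chi> i. a $ i + e) $ i" by simp
qed

lemma zero_mem_Im1: "(\<lambda>i. 0) \<in> Im1 P a"
  unfolding Im1_def by (rule CollectI, rule exI[of _ "\<lambda>j. 0"]) (auto intro!: ext)

lemma Fz_subset_if_close:
  assumes "close_regrading P Q e"
  shows "Fz P a \<subseteq> Fz Q (vshift a e)"
  using assms unfolding close_regrading_def Fz_def by (auto intro: vle_vshift_if_close)

lemma Im1_subset_if_close:
  assumes "close_regrading P Q e"
  shows "Im1 P a \<subseteq> Im1 Q (vshift a e)"
proof
  fix w assume "w \<in> Im1 P a"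
  then obtain y where w: "w = (\<lambda>i. \<Sum>j<nrel P. coef P i j * y j)"
    and y: "\<forall>j. y j \<noteq> 0 \<longrightarrow> j < nrel P \<and> vle (rgr P j) a"
    unfolding Im1_def by blast
  have "\<forall>j. y j \<noteq> 0 \<longrightarrow> j < nrel Q \<and> vle (rgr Q j) (vshift a e)"
    using y assms vle_vshift_if_close unfolding close_regrading_def by metis
  moreover have "w = (\<lambda>i. \<Sum>j<nrel Q. coef Q i j * y j)"
    using w assms unfolding close_regrading_def by simp
  ultimately show "w \<in> Im1 Q (vshift a e)" unfolding Im1_def by blast
qed

lemma shift_mor_id_if_close:
  assumes "close_regrading P Q e"
  shows "shift_mor P Q e (\<lambda>a v. v)"
  unfolding shift_mor_def image_ident
  using Fz_subset_if_close[OF assms] Im1_subset_if_close[OF assms] by (simp add: zero_mem_Im1)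

lemma interleaved_if_close:
  assumes "close_regrading P Q e"
  shows "interleaved P Q e"
  unfolding interleaved_def
  using shift_mor_id_if_close[OF assms] shift_mor_id_if_close[OF close_regrading_sym[OF assms]]
  by (intro exI[of _ "\<lambda>a v. v"]) (simp add: zero_mem_Im1)

lemma dI_le_if_close:
  assumes "close_regrading P Q e" and "0 \<le> e"
  shows "dI P Q \<le> ereal e"
proof -
  have "ereal e \<in> ereal ` {e. 0 \<le> e \<and> interleaved P Q e}"
    using assms interleaved_if_close by blast
  then show ?thesis unfolding dI_def by (rule Inf_lower)
qed

lemma merge_coord_dist_le:
  assumes "0 \<le> d"
  shows "\<bar>merge_coord S d x - x\<bar> \<le> d"
proof (cases "\<exists>y\<in>S. y - d \<le> x \<and> x \<le> y + d")
  case True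
  then have "\<exists>y. y \<in> S \<and> y - d \<le> x \<and> x \<le> y + d" by blast
  from someI_ex[OF this] True show ?thesis
    unfolding merge_coord_def by auto
next
  case False
  then show ?thesis using assms unfolding merge_coord_def by auto
qed

lemma close_regrading_merge_pres:
  assumes "0 \<le> \<delta>"
  shows "close_regrading P (merge_pres G k \<delta> P) \<delta>"
  unfolding close_regrading_def merge_pres_def merge_def
  by (simp add: merge_coord_dist_le[OF assms])

theorem mainTheorem7:
  fixes G :: "'n::finite \<Rightarrow> nat \<Rightarrow> real" and k :: "'n \<Rightarrow> nat" and \<delta> :: real
    and P :: "('k::field, 'n) pres"
  assumes "pres_wf P"
    and "0 \<le> \<delta>"
    and "ereal \<delta> < grid_const G k / 2"
  shows "dI (merge_pres G k \<delta> P) P \<le> ereal \<delta>"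
  using close_regrading_merge_pres[OF assms(2)] close_regrading_sym dI_le_if_close assms(2) by blast

end
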